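(* Let $p$ be a prime, $n\ge 3$, $N$ a positive integer, $T=(n-1)(n-2)/2+2(n-1)$, $v_1,v_2\in\mathbb{Z}_p^T$ fixed, $K,M$ independent uniform random vectors on $\mathbb{Z}_p^T$, and $D(x)=(2-x)v_1+(x-1)v_2+(x-1)(x-2)(K+xM)$. Let $\mathcal A:\mathbb{Z}_p^T\to\mathbb{Z}_p$ be an algorithm (a fixed function) whose success probability $q=\mathbb{P}(\mathcal A(\mathbf U)=Z_{n-1}(\mathbf U;p))$ is positive, where $\mathbf U$ is uniform on $\mathbb{Z}_p^T$. Let $\mathcal N$ be the number of $x\in\{3,4,\dots,p\}$ with $\mathcal A(D(x))=Z_{n-1}(D(x);p)$. Then $$\mathbb{P}\big(\mathcal N\ge (p-2)q/2\big)\ge 1-\frac{1}{(p-2)q^2},$$ where the probability is over $K$ and $M$.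
   Context: Arithmetic is in $\mathbb{Z}_p$; elements of $\{3,\dots,p\}$ are viewed as residues mod $p$. For $\boldsymbol\sigma\in\{-1,1\}^{m}$, $I_m(\boldsymbol\sigma)=|\{(i,j):1\le i<j\le m,\ \sigma_i\ne\sigma_j\}|$ and $f(m,\boldsymbol\sigma)=\frac{m(m-1)}2-m-I_m(\boldsymbol\sigma)$. A vector in $\mathbb{Z}_p^T$ with $T=m(m-1)/2+2m$ is read as $(\mathbf J,\mathbf B,\mathbf C)$ (first $m(m-1)/2$ coordinates are $J_{ij}$, $1\le i<j\le m$, then $B_1,\dots,B_m$, then $C_1,\dots,C_m$), and $$Z_m(\mathbf J,\mathbf B,\mathbf C;p)=\sum_{\boldsymbol\sigma\in\{-1,1\}^m}2^{Nf(m,\boldsymbol\sigma)}\Big(\prod_{i:\sigma_i=-1}B_i\Big)\Big(\prod_{i:\sigma_i=+1}C_i\Big)\Big(\prod_{i<j:\sigma_i\ne\sigma_j}J_{ij}\Big)\pmod p.$$ *)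

theory Defs
  imports Complex_Main "HOL-Library.FuncSet" "HOL-Computational_Algebra.Primes"
begin

text \<open>Vectors of Z_p^T are represented as int lists of length T with entries in {0..<p}.\<close>
definition vecs :: "nat \<Rightarrow> nat \<Rightarrow> int list set" where
  "vecs p T = {u. length u = T \<and> set u \<subseteq> {0..<int p}}"

definition dimT :: "nat \<Rightarrow> nat" where
  "dimT m = m * (m - 1) div 2 + 2 * m"

text \<open>0-based position of J_ij (1 \<le> i < j \<le> m), lexicographic order (1,2),(1,3),...,(1,m),(2,3),...\<close>
definition Jidx :: "nat \<Rightarrow> nat \<Rightarrow> nat \<Rightarrow> nat" where
  "Jidx m i j = (i - 1) * (2 * m - i) div 2 + (j - i) - 1"

definition Jc :: "nat \<Rightarrow> int list \<Rightarrow> nat \<Rightarrow> nat \<Rightarrow> int" where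
  "Jc m u i j = u ! Jidx m i j"
definition Bc :: "nat \<Rightarrow> int list \<Rightarrow> nat \<Rightarrow> int" where
  "Bc m u i = u ! (m * (m - 1) div 2 + i - 1)"
definition Cc :: "nat \<Rightarrow> int list \<Rightarrow> nat \<Rightarrow> int" where
  "Cc m u i = u ! (m * (m - 1) div 2 + m + i - 1)"

definition spins :: "nat \<Rightarrow> (nat \<Rightarrow> int) set" where
  "spins m = ({1..m} \<rightarrow>\<^sub>E {-1, 1})"

definition disagree :: "nat \<Rightarrow> (nat \<Rightarrow> int) \<Rightarrow> (nat \<times> nat) set" where
  "disagree m \<sigma> = {(i, j). 1 \<le> i \<and> i < j \<and> j \<le> m \<and> \<sigma> i \<noteq> \<sigma> j}"

definition Icnt :: "nat \<Rightarrow> (nat \<Rightarrow> int) \<Rightarrow> nat" where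
  "Icnt m \<sigma> = card (disagree m \<sigma>)"

definition fexp :: "nat \<Rightarrow> (nat \<Rightarrow> int) \<Rightarrow> int" where
  "fexp m \<sigma> = int (m * (m - 1) div 2) - int m - int (Icnt m \<sigma>)"

text \<open>2^k in Z_p for integer k; negative powers use the inverse (p+1)/2 of 2 modulo an odd p.\<close>
definition pow2 :: "nat \<Rightarrow> int \<Rightarrow> int" where
  "pow2 p k = (if k \<ge> 0 then 2 ^ nat k mod int p
               else ((int p + 1) div 2) ^ nat (- k) mod int p)"

definition Zm :: "nat \<Rightarrow> nat \<Rightarrow> nat \<Rightarrow> int list \<Rightarrow> int" where
  "Zm N p m u =
     (\<Sum>\<sigma>\<in>spins m. pow2 p (int N * fexp m \<sigma>)
        * (\<Prod>i\<in>{i\<in>{1..m}. \<sigma> i = -1}. Bc m u i)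
        * (\<Prod>i\<in>{i\<in>{1..m}. \<sigma> i = 1}. Cc m u i)
        * (\<Prod>(i, j)\<in>disagree m \<sigma>. Jc m u i j)) mod int p"

definition Dvec :: "nat \<Rightarrow> int list \<Rightarrow> int list \<Rightarrow> int list \<Rightarrow> int list \<Rightarrow> int \<Rightarrow> int list" where
  "Dvec p v1 v2 K M x =
     map (\<lambda>k. ((2 - x) * v1 ! k + (x - 1) * v2 ! k
               + (x - 1) * (x - 2) * (K ! k + x * M ! k)) mod int p) [0..<length v1]"

end

theory Submission
  imports Defs "HOL-Number_Theory.Cong"
begin

(* For 3 <= x <= p the factors x - 1 and x - 2 are units mod p, so (K, M) |-> (D(x), M) is a
   bijection of pairs of vectors; for distinct x, y in {3..p} so is (K, M) |-> (D(x), D(y)),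
   because x - y is a unit as well.  Hence each D(x) is uniform and the D(x) are pairwise
   independent, so the success events are pairwise independent with probability q each.
   Their number has mean (p - 2) q and variance (p - 2) q (1 - q), and Chebyshev's inequality
   bounds the probability of falling below half the mean by 4 (1 - q) / ((p - 2) q), which is
   at most 1 / ((p - 2) q^2) since 4 q (1 - q) <= 1. *)

lemma card_filter_eq_sum_of_bool:
  "finite I \<Longrightarrow> real (card {x \<in> I. P x}) = (\<Sum>x\<in>I. of_bool (P x))"
  by (simp add: Int_def)

lemma sum_of_bool_mem_eq_card:
  "finite S \<Longrightarrow> F \<subseteq> S \<Longrightarrow> (\<Sum>s\<in>S. of_bool (s \<in> F)) = real (card F)"
  by (simp add: Int_absorb1 Int_def[symmetric])

lemma sum_card_events:
  fixes E :: "'i \<Rightarrow> 's set"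
  assumes "finite S" "finite I" "\<And>x. x \<in> I \<Longrightarrow> E x \<subseteq> S"
  shows "(\<Sum>s\<in>S. real (card {x \<in> I. s \<in> E x})) = (\<Sum>x\<in>I. real (card (E x)))"
proof -
  have "(\<Sum>s\<in>S. real (card {x \<in> I. s \<in> E x})) = (\<Sum>x\<in>I. \<Sum>s\<in>S. of_bool (s \<in> E x))"
    by (simp only: card_filter_eq_sum_of_bool[OF assms(2)] sum.swap[of _ S])
  also have "\<dots> = (\<Sum>x\<in>I. real (card (E x)))"
    using assms by (intro sum.cong refl sum_of_bool_mem_eq_card)
  finally show ?thesis .
qed

lemma sum_card_events_squared:
  fixes E :: "'i \<Rightarrow> 's set"
  assumes "finite S" "finite I" "\<And>x. x \<in> I \<Longrightarrow> E x \<subseteq> S"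
  shows "(\<Sum>s\<in>S. (real (card {x \<in> I. s \<in> E x}))\<^sup>2)
       = (\<Sum>x\<in>I. \<Sum>y\<in>I. real (card (E x \<inter> E y)))"
proof -
  have "(\<Sum>s\<in>S. (real (card {x \<in> I. s \<in> E x}))\<^sup>2)
      = (\<Sum>x\<in>I. \<Sum>y\<in>I. \<Sum>s\<in>S. of_bool (s \<in> E x \<inter> E y))"
    by (simp only: card_filter_eq_sum_of_bool[OF assms(2)] power2_eq_square sum_product
        of_bool_conj[symmetric] Int_iff sum.swap[of _ S])
  also have "\<dots> = (\<Sum>x\<in>I. \<Sum>y\<in>I. real (card (E x \<inter> E y)))"
    using assms by (intro sum.cong refl sum_of_bool_mem_eq_card) auto
  finally show ?thesis .
qed

lemma sum_sq_deviation_pairwise_independent: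
  fixes E :: "'i \<Rightarrow> 's set" and q :: real
  assumes "finite S" "finite I" "\<And>x. x \<in> I \<Longrightarrow> E x \<subseteq> S"
    and single: "\<And>x. x \<in> I \<Longrightarrow> real (card (E x)) = q * real (card S)"
    and pair: "\<And>x y. x \<in> I \<Longrightarrow> y \<in> I \<Longrightarrow> x \<noteq> y
                 \<Longrightarrow> real (card (E x \<inter> E y)) = q\<^sup>2 * real (card S)"
  shows "(\<Sum>s\<in>S. (real (card {x \<in> I. s \<in> E x}) - real (card I) * q)\<^sup>2)
       = real (card I) * q * (1 - q) * real (card S)"
proof -
  define n where "n = real (card I)"
  define N where "N s = real (card {x \<in> I. s \<in> E x})" for s
  have row: "(\<Sum>y\<in>I. real (card (E x \<inter> E y))) = q * real (card S) + (n - 1) * q\<^sup>2 * real (card S)"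
    if x: "x \<in> I" for x
  proof -
    have "(\<Sum>y\<in>I. real (card (E x \<inter> E y)))
        = real (card (E x)) + (\<Sum>y\<in>I - {x}. real (card (E x \<inter> E y)))"
      using sum.remove[OF assms(2) x, of "\<lambda>y. real (card (E x \<inter> E y))"] by simp
    also have "\<dots> = q * real (card S) + (\<Sum>y\<in>I - {x}. q\<^sup>2 * real (card S))"
      using single[OF x] pair[OF x] by (simp only:) (intro arg_cong2[where f = "(+)"] sum.cong; auto)
    also have "\<dots> = q * real (card S) + (n - 1) * q\<^sup>2 * real (card S)"
    proof -
      have "0 < card I" using x assms(2) card_gt_0_iff by blast
      then show ?thesis using x assms(2) by (simp add: n_def of_nat_diff)
    qed
    finally show ?thesis .
  qed
  have "(\<Sum>s\<in>S. (N s - n * q)\<^sup>2) = (\<Sum>s\<in>S. (N s)\<^sup>2 - (2 * n * q) * N s + (n * q)\<^sup>2)"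
    by (simp add: power2_diff algebra_simps)
  also have "\<dots> = (\<Sum>s\<in>S. (N s)\<^sup>2) - 2 * n * q * (\<Sum>s\<in>S. N s) + (n * q)\<^sup>2 * real (card S)"
    by (simp only: sum.distrib sum_subtractf sum_distrib_left[symmetric] sum_constant) simp
  also have "\<dots> = n * q * (1 - q) * real (card S)"
  proof -
    have "(\<Sum>s\<in>S. N s) = n * (q * real (card S))"
      using sum_card_events[OF assms(1-3)] single by (simp add: N_def n_def)
    moreover have "(\<Sum>s\<in>S. (N s)\<^sup>2) = n * (q * real (card S) + (n - 1) * q\<^sup>2 * real (card S))"
      using sum_card_events_squared[OF assms(1-3)] row by (simp add: N_def n_def)
    ultimately show ?thesis by (simp add: power2_eq_square algebra_simps)
  qed
  finally show ?thesis unfolding N_def n_def .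
qed

lemma card_large_deviation_le:
  fixes f :: "'a \<Rightarrow> real"
  assumes "finite S" "0 \<le> t"
  shows "real (card {s \<in> S. t \<le> \<bar>f s - \<mu>\<bar>}) * t\<^sup>2 \<le> (\<Sum>s\<in>S. (f s - \<mu>)\<^sup>2)"
proof -
  let ?B = "{s \<in> S. t \<le> \<bar>f s - \<mu>\<bar>}"
  have "real (card ?B) * t\<^sup>2 = (\<Sum>s\<in>?B. t\<^sup>2)" by simp
  also have "\<dots> \<le> (\<Sum>s\<in>?B. (f s - \<mu>)\<^sup>2)"
  proof (rule sum_mono)
    fix s assume "s \<in> ?B"
    then have "t\<^sup>2 \<le> \<bar>f s - \<mu>\<bar>\<^sup>2" using assms(2) by (intro power_mono) auto
    then show "t\<^sup>2 \<le> (f s - \<mu>)\<^sup>2" by simp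
  qed
  also have "\<dots> \<le> (\<Sum>s\<in>S. (f s - \<mu>)\<^sup>2)"
    by (rule sum_mono2) (use assms(1) in auto)
  finally show ?thesis .
qed

lemma card_pairwise_independent_events_below_half_mean:
  fixes E :: "'i \<Rightarrow> 's set" and q :: real
  assumes "finite S" "finite I" "\<And>x. x \<in> I \<Longrightarrow> E x \<subseteq> S"
    and "\<And>x. x \<in> I \<Longrightarrow> real (card (E x)) = q * real (card S)"
    and "\<And>x y. x \<in> I \<Longrightarrow> y \<in> I \<Longrightarrow> x \<noteq> y
           \<Longrightarrow> real (card (E x \<inter> E y)) = q\<^sup>2 * real (card S)"
    and "q > 0"
  shows "real (card {s \<in> S. real (card {x \<in> I. s \<in> E x}) < real (card I) * q / 2})
           * (real (card I) * q\<^sup>2)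
         \<le> real (card S)"
proof -
  define n where "n = real (card I)"
  define N where "N s = real (card {x \<in> I. s \<in> E x})" for s
  define B where "B = {s \<in> S. N s < n * q / 2}"
  have "real (card B) * (n * q\<^sup>2) \<le> real (card S)" if n_pos: "n > 0"
  proof -
    have "B \<subseteq> {s \<in> S. n * q / 2 \<le> \<bar>N s - n * q\<bar>}" by (auto simp: B_def abs_if)
    then have "real (card B) \<le> real (card {s \<in> S. n * q / 2 \<le> \<bar>N s - n * q\<bar>})"
      using assms(1) by (simp add: card_mono)
    then have "real (card B) * (n * q / 2)\<^sup>2
             \<le> real (card {s \<in> S. n * q / 2 \<le> \<bar>N s - n * q\<bar>}) * (n * q / 2)\<^sup>2"
      by (rule mult_right_mono) simp
    also have "\<dots> \<le> (\<Sum>s\<in>S. (N s - n * q)\<^sup>2)"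
      using assms(1,6) n_pos by (intro card_large_deviation_le) auto
    also have "\<dots> = n * q * (1 - q) * real (card S)"
      unfolding N_def n_def by (rule sum_sq_deviation_pairwise_independent[OF assms(1-5)])
    finally have "(n * q) * (real (card B) * (n * q)) \<le> (n * q) * (4 * (1 - q) * real (card S))"
      by (simp add: power2_eq_square algebra_simps)
    then have "real (card B) * (n * q) \<le> 4 * (1 - q) * real (card S)"
      using n_pos assms(6) by (meson mult_left_le_imp_le mult_pos_pos)
    then have "real (card B) * (n * q) * q \<le> 4 * (1 - q) * real (card S) * q"
      by (rule mult_right_mono) (use assms(6) in simp)
    also have "\<dots> = (4 * q * (1 - q)) * real (card S)"
      by (simp only: mult_ac)
    also have "\<dots> \<le> 1 * real (card S)"
      using zero_le_power2[of "1 - 2 * q"]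
      by (intro mult_right_mono) (auto simp: power2_eq_square algebra_simps)
    finally show ?thesis
      by (simp add: power2_eq_square mult.assoc)
  qed
  moreover have "B = {}" if "n = 0" using that by (auto simp: B_def N_def)
  ultimately show ?thesis
    by (cases "n = 0") (auto simp: B_def N_def n_def)
qed

lemma card_pairwise_independent_events_concentrate:
  fixes E :: "'i \<Rightarrow> 's set" and q :: real
  assumes "finite S" "S \<noteq> {}" "finite I" "\<And>x. x \<in> I \<Longrightarrow> E x \<subseteq> S"
    and "\<And>x. x \<in> I \<Longrightarrow> real (card (E x)) = q * real (card S)"
    and "\<And>x y. x \<in> I \<Longrightarrow> y \<in> I \<Longrightarrow> x \<noteq> y
           \<Longrightarrow> real (card (E x \<inter> E y)) = q\<^sup>2 * real (card S)"
    and "q > 0"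
  shows "real (card {s \<in> S. real (card {x \<in> I. s \<in> E x}) \<ge> real (card I) * q / 2})
           / real (card S)
         \<ge> 1 - 1 / (real (card I) * q\<^sup>2)"
proof -
  define n where "n = real (card I)"
  define N where "N s = real (card {x \<in> I. s \<in> E x})" for s
  define G where "G = {s \<in> S. N s \<ge> n * q / 2}"
  define B where "B = {s \<in> S. N s < n * q / 2}"
  have S_pos: "real (card S) > 0" using assms(1,2) by (simp add: card_gt_0_iff)
  have "G \<union> B = S" "G \<inter> B = {}" by (auto simp: G_def B_def)
  then have "card G + card B = card S"
    using assms(1) card_Un_disjoint[of G B] by (metis finite_Un)
  then have card_G: "real (card G) / real (card S) = 1 - real (card B) / real (card S)"
    using S_pos by (simp add: field_simps flip: of_nat_add)
  have B: "real (card B) * (n * q\<^sup>2) \<le> real (card S)"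
    unfolding B_def N_def n_def
    by (rule card_pairwise_independent_events_below_half_mean[OF assms(1,3-7)])
  show ?thesis
  proof (cases "n = 0")
    case True
    then have "B = {}" by (auto simp: B_def N_def)
    then show ?thesis using True card_G by (simp add: G_def N_def n_def)
  next
    case False
    then have "real (card B) / real (card S) \<le> 1 / (n * q\<^sup>2)"
      using B S_pos assms(7) by (simp add: n_def field_simps)
    then show ?thesis using card_G by (simp add: G_def N_def n_def)
  qed
qed

lemma finite_vecs: "finite (vecs p T)"
proof -
  have "vecs p T = {xs. set xs \<subseteq> {0..<int p} \<and> length xs = T}"
    by (auto simp: vecs_def)
  then show ?thesis using finite_lists_length_eq[of "{0..<int p}" T] by simp
qed

lemma vecs_nonempty: "p > 0 \<Longrightarrow> vecs p T \<noteq> {}"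
  by (auto simp: vecs_def intro!: exI[of _ "replicate T 0"])

lemma vecs_eqI:
  assumes "u \<in> vecs p T" "w \<in> vecs p T" "\<And>k. k < T \<Longrightarrow> [u ! k = w ! k] (mod int p)"
  shows "u = w"
proof (rule nth_equalityI)
  show "length u = length w" using assms(1,2) by (simp add: vecs_def)
  fix k assume "k < length u"
  then have k: "k < T" using assms(1) by (simp add: vecs_def)
  then have "u ! k \<in> set u" "w ! k \<in> set w" using assms(1,2) by (simp_all add: vecs_def)
  then have "u ! k \<in> {0..<int p}" "w ! k \<in> {0..<int p}" using assms(1,2) by (auto simp: vecs_def)
  then show "u ! k = w ! k" using assms(3)[OF k] by (intro cong_less_imp_eq_int) auto
qed

lemma Dvec_in_vecs: "0 < p \<Longrightarrow> length v1 = T \<Longrightarrow> Dvec p v1 v2 K M x \<in> vecs p T"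
  by (auto simp: vecs_def Dvec_def)

lemma coprime_if_abs_less_prime:
  fixes d :: int
  assumes "prime p" "d \<noteq> 0" "\<bar>d\<bar> < int p"
  shows "coprime d (int p)"
proof -
  have "\<not> int p dvd d" using assms(2,3) dvd_imp_le_int by force
  moreover have "prime (int p)" using assms(1) by simp
  ultimately show ?thesis using prime_imp_coprime coprime_commute by blast
qed

lemma Dvec_eq_imp_cong:
  assumes "prime p" "x \<in> {3..int p}" "k < length v1"
    and "Dvec p v1 v2 K M x = Dvec p v1 v2 K' M' x"
  shows "[K ! k + x * M ! k = K' ! k + x * M' ! k] (mod int p)"
proof -
  let ?e = "(2 - x) * v1 ! k + (x - 1) * v2 ! k"
  have "[?e + ((x - 1) * (x - 2)) * (K ! k + x * M ! k)
       = ?e + ((x - 1) * (x - 2)) * (K' ! k + x * M' ! k)] (mod int p)"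
    using arg_cong[OF assms(4), of "\<lambda>u. u ! k"] assms(3) by (simp add: Dvec_def cong_def mult.assoc)
  moreover have "coprime ((x - 1) * (x - 2)) (int p)"
    using assms(1,2) by (auto intro: coprime_if_abs_less_prime)
  ultimately show ?thesis by (simp only: cong_add_lcancel cong_mult_lcancel)
qed

lemma Dvec_eq_same_M_imp_eq:
  assumes "prime p" "length v1 = T" "x \<in> {3..int p}" "K \<in> vecs p T" "K' \<in> vecs p T"
    and "Dvec p v1 v2 K M x = Dvec p v1 v2 K' M x"
  shows "K = K'"
  using assms(4,5)
proof (rule vecs_eqI)
  fix k assume "k < T"
  then show "[K ! k = K' ! k] (mod int p)"
    using Dvec_eq_imp_cong[OF assms(1,3) _ assms(6)] assms(2) by (simp add: cong_add_rcancel)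
qed

lemma Dvec_pair_eq_imp_eq:
  assumes "prime p" "length v1 = T" "x \<in> {3..int p}" "y \<in> {3..int p}" "x \<noteq> y"
    and "K \<in> vecs p T" "K' \<in> vecs p T" "M \<in> vecs p T" "M' \<in> vecs p T"
    and "Dvec p v1 v2 K M x = Dvec p v1 v2 K' M' x" "Dvec p v1 v2 K M y = Dvec p v1 v2 K' M' y"
  shows "K = K' \<and> M = M'"
proof -
  have cx: "[K ! k + x * M ! k = K' ! k + x * M' ! k] (mod int p)" if "k < T" for k
    using Dvec_eq_imp_cong[OF assms(1,3) _ assms(10)] that assms(2) by simp
  have cy: "[K ! k + y * M ! k = K' ! k + y * M' ! k] (mod int p)" if "k < T" for k
    using Dvec_eq_imp_cong[OF assms(1,4) _ assms(11)] that assms(2) by simp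
  have "coprime (x - y) (int p)"
    using assms(3-5) by (intro coprime_if_abs_less_prime[OF assms(1)]) (auto simp: abs_if)
  have "M = M'"
  proof (rule vecs_eqI[OF assms(8,9)])
    fix k assume "k < T"
    have "[(x - y) * M ! k = (x - y) * M' ! k] (mod int p)"
      using cong_diff[OF cx[OF \<open>k < T\<close>] cy[OF \<open>k < T\<close>]] by (simp add: algebra_simps)
    then show "[M ! k = M' ! k] (mod int p)"
      using \<open>coprime (x - y) (int p)\<close> by (simp add: cong_mult_lcancel)
  qed
  moreover have "K = K'"
    using Dvec_eq_same_M_imp_eq[OF assms(1-3,6,7)] assms(10) \<open>M = M'\<close> by simp
  ultimately show ?thesis by simp
qed

lemma bij_betw_if_inj_on_endo: "finite A \<Longrightarrow> f ` A \<subseteq> A \<Longrightarrow> inj_on f A \<Longrightarrow> bij_betw f A A"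
  by (simp add: bij_betw_def endo_inj_surj)

lemma card_Dvec_event:
  assumes "prime p" "length v1 = T" "x \<in> {3..int p}"
  shows "card {(K, M) \<in> vecs p T \<times> vecs p T. P (Dvec p v1 v2 K M x)}
       = card {U \<in> vecs p T. P U} * card (vecs p T)"
proof -
  let ?V = "vecs p T"
  let ?h = "\<lambda>(K, M). (Dvec p v1 v2 K M x, M)"
  have "bij_betw ?h (?V \<times> ?V) (?V \<times> ?V)"
  proof (rule bij_betw_if_inj_on_endo)
    show "?h ` (?V \<times> ?V) \<subseteq> ?V \<times> ?V"
      using assms(1,2) prime_gt_0_nat by (auto intro: Dvec_in_vecs)
    show "inj_on ?h (?V \<times> ?V)"
      using assms by (auto simp: inj_on_def intro: Dvec_eq_same_M_imp_eq)
  qed (simp add: finite_vecs)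
  then have "card {s \<in> ?V \<times> ?V. P (fst (?h s))} = card {t \<in> ?V \<times> ?V. P (fst t)}"
    by (intro bij_betw_same_card bij_betw_Collect) simp_all
  moreover have "{t \<in> ?V \<times> ?V. P (fst t)} = {U \<in> ?V. P U} \<times> ?V" by auto
  moreover have "{s \<in> ?V \<times> ?V. P (fst (?h s))} = {(K, M) \<in> ?V \<times> ?V. P (Dvec p v1 v2 K M x)}"
    by auto
  ultimately show ?thesis by (simp add: card_cartesian_product)
qed

lemma card_Dvec_event_pair:
  assumes "prime p" "length v1 = T" "x \<in> {3..int p}" "y \<in> {3..int p}" "x \<noteq> y"
  shows "card {(K, M) \<in> vecs p T \<times> vecs p T. P (Dvec p v1 v2 K M x) \<and> Q (Dvec p v1 v2 K M y)}
       = card {U \<in> vecs p T. P U} * card {U \<in> vecs p T. Q U}"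
proof -
  let ?V = "vecs p T"
  let ?h = "\<lambda>(K, M). (Dvec p v1 v2 K M x, Dvec p v1 v2 K M y)"
  have "bij_betw ?h (?V \<times> ?V) (?V \<times> ?V)"
  proof (rule bij_betw_if_inj_on_endo)
    show "?h ` (?V \<times> ?V) \<subseteq> ?V \<times> ?V"
      using assms(1,2) prime_gt_0_nat by (auto intro: Dvec_in_vecs)
    show "inj_on ?h (?V \<times> ?V)"
      using Dvec_pair_eq_imp_eq[OF assms] by (auto simp: inj_on_def)
  qed (simp add: finite_vecs)
  then have "card {s \<in> ?V \<times> ?V. P (fst (?h s)) \<and> Q (snd (?h s))}
           = card {t \<in> ?V \<times> ?V. P (fst t) \<and> Q (snd t)}"
    by (intro bij_betw_same_card bij_betw_Collect) simp_all
  moreover have "{t \<in> ?V \<times> ?V. P (fst t) \<and> Q (snd t)} = {U \<in> ?V. P U} \<times> {U \<in> ?V. Q U}"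
    by auto
  moreover have "{s \<in> ?V \<times> ?V. P (fst (?h s)) \<and> Q (snd (?h s))}
               = {(K, M) \<in> ?V \<times> ?V. P (Dvec p v1 v2 K M x) \<and> Q (Dvec p v1 v2 K M y)}"
    by auto
  ultimately show ?thesis by (simp add: card_cartesian_product)
qed

lemma card_Dvec_success_concentrate:
  fixes P :: "int list \<Rightarrow> bool" and q :: real
  assumes "prime p" "length v1 = T"
    and "q = real (card {U \<in> vecs p T. P U}) / real (card (vecs p T))" "q > 0"
  shows "real (card {(K, M) \<in> vecs p T \<times> vecs p T.
             real (card {x \<in> {3..int p}. P (Dvec p v1 v2 K M x)}) \<ge> (real p - 2) * q / 2})
         / real (card (vecs p T \<times> vecs p T))
         \<ge> 1 - 1 / ((real p - 2) * q ^ 2)"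
proof -
  define V where "V = vecs p T"
  define I where "I = {3..int p}"
  define E where "E x = {(K, M) \<in> V \<times> V. P (Dvec p v1 v2 K M x)}" for x
  have V_pos: "real (card V) > 0"
    using assms(1) finite_vecs vecs_nonempty prime_gt_0_nat by (simp add: V_def card_gt_0_iff)
  have q: "real (card {U \<in> V. P U}) = q * real (card V)"
    using assms(3) V_pos by (simp add: V_def)
  have "real (card {s \<in> V \<times> V. real (card {x \<in> I. s \<in> E x}) \<ge> real (card I) * q / 2})
          / real (card (V \<times> V)) \<ge> 1 - 1 / (real (card I) * q\<^sup>2)"
  proof (rule card_pairwise_independent_events_concentrate)
    show "finite (V \<times> V)" "V \<times> V \<noteq> {}" "finite I"
      using V_pos by (auto simp: V_def I_def finite_vecs)
    show "E x \<subseteq> V \<times> V" for x by (auto simp: E_def)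
    show "real (card (E x)) = q * real (card (V \<times> V))" if "x \<in> I" for x
      using card_Dvec_event[OF assms(1,2) that[unfolded I_def]] q
      by (simp add: E_def V_def card_cartesian_product)
    show "real (card (E x \<inter> E y)) = q\<^sup>2 * real (card (V \<times> V))"
      if "x \<in> I" "y \<in> I" "x \<noteq> y" for x y
    proof -
      have "E x \<inter> E y = {(K, M) \<in> V \<times> V. P (Dvec p v1 v2 K M x) \<and> P (Dvec p v1 v2 K M y)}"
        by (auto simp: E_def)
      then show ?thesis
        using card_Dvec_event_pair[OF assms(1,2) that[unfolded I_def]] q
        by (simp add: V_def card_cartesian_product power2_eq_square)
    qed
  qed (fact assms(4))
  moreover have "real (card I) = real p - 2"
    using prime_ge_2_nat[OF assms(1)] by (simp add: I_def of_nat_diff)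
  moreover have "{x \<in> I. (K, M) \<in> E x} = {x \<in> I. P (Dvec p v1 v2 K M x)}"
    if "K \<in> V" "M \<in> V" for K M
    using that by (auto simp: E_def)
  then have "{s \<in> V \<times> V. real (card {x \<in> I. s \<in> E x}) \<ge> (real p - 2) * q / 2}
           = {(K, M) \<in> V \<times> V. real (card {x \<in> I. P (Dvec p v1 v2 K M x)}) \<ge> (real p - 2) * q / 2}"
    by auto
  ultimately show ?thesis
    by (simp add: V_def I_def)
qed

theorem lemma3:
  fixes p n N :: nat and v1 v2 :: "int list" and A :: "int list \<Rightarrow> int" and q :: real
  assumes "prime p" and "n \<ge> 3" and "N > 0"
    and "v1 \<in> vecs p (dimT (n - 1))" and "v2 \<in> vecs p (dimT (n - 1))"
    and "q = real (card {U \<in> vecs p (dimT (n - 1)). A U = Zm N p (n - 1) U})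
             / real (card (vecs p (dimT (n - 1))))"
    and "q > 0"
  shows "real (card {(K, M) \<in> vecs p (dimT (n - 1)) \<times> vecs p (dimT (n - 1)).
             real (card {x \<in> {3..int p}. A (Dvec p v1 v2 K M x) = Zm N p (n - 1) (Dvec p v1 v2 K M x)})
               \<ge> (real p - 2) * q / 2})
         / real (card (vecs p (dimT (n - 1)) \<times> vecs p (dimT (n - 1))))
         \<ge> 1 - 1 / ((real p - 2) * q ^ 2)"
proof -
  have "length v1 = dimT (n - 1)" using assms(4) by (simp add: vecs_def)
  then show ?thesis by (rule card_Dvec_success_concentrate[OF assms(1) _ assms(6,7)])
qed

end
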